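(* Let $k>0$ and $\ell\ge0$ be integers, $q=2^k$ and $Q=2^{\ell}$. Then the polynomial $(X^{q^2}+X^q+X)\circ X^{Q+1}=X^{q^2(Q+1)}+X^{q(Q+1)}+X^{Q+1}$ is injective on $u+\mathbb{F}_q$ for every $u\in\mathbb{F}_{q^3}$ if and only if $\gcd(q-1,Q+1)=1$, or equivalently, if and only if $\operatorname{ord}_2(k)\le\operatorname{ord}_2(\ell)$.
   Context: For a nonzero integer $N$, $\operatorname{ord}_2(N)$ is the largest integer $s\ge0$ with $2^s\mid N$, and $\operatorname{ord}_2(0)=\infty$. *)

theory Defs
  imports "HOL-Computational_Algebra.Computational_Algebra" "HOL-Library.Extended_Nat"
begin

definition ord2 :: "nat \<Rightarrow> enat" where
  "ord2 N = (if N = 0 then \<infinity> else enat (multiplicity (2::nat) N))"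

text \<open>The subfield F_q of a finite field of characteristic p containing it:
  the set of elements fixed by the q-Frobenius x \<mapsto> x^q.\<close>
definition subfield_of_order :: "nat \<Rightarrow> 'a::field set" where
  "subfield_of_order q = {a. a ^ q = a}"

end

theory Submission
  imports Defs "HOL-Number_Theory.Number_Theory"
begin

(* Write q = 2^k, Q = 2^l and T x = x^(q^2) + x^q + x for the trace of F_(q^3) over F_q, so that
   the polynomial is f x = T (x^(Q+1)).  T is F_q-linear, commutes with the Frobenius power x^Q
   and is the identity on F_q (as 3 = 1 in characteristic 2).  Expanding (u + a)^(Q+1) therefore
   gives f (u + a) = f u + t^(Q+1) + (t + a)^(Q+1) for a in F_q, where t = T u lies in F_q.
   So f is injective on u + F_q iff x^(Q+1) is injective on F_q, i.e. iff gcd (q - 1) (Q + 1) = 1.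
   A common divisor d of 2^k - 1 and 2^l + 1 has ord_d 2 dividing both k and 2 l; if
   ord_2 k <= ord_2 l this forces ord_d 2 to divide l, whence d divides 2 and d = 1.  Otherwise,
   with b = ord_2 l, the number 2^(2^b) + 1 divides both 2^k - 1 and 2^l + 1. *)

lemma cong_minus_one_mod_plus_one: "[int y = -1] (mod int y + 1)"
  by (simp add: cong_iff_dvd_diff)

lemma plus_one_dvd_power_plus_one:
  fixes y :: nat
  assumes "odd n"
  shows "y + 1 dvd y ^ n + 1"
proof -
  have "[int y ^ n = (-1) ^ n] (mod int y + 1)"
    by (intro cong_pow cong_minus_one_mod_plus_one)
  then have "[int y ^ n = -1] (mod int y + 1)"
    using assms by simp
  then have "int (y + 1) dvd int (y ^ n + 1)"
    by (simp add: cong_iff_dvd_diff ac_simps)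
  then show ?thesis
    by (simp only: of_nat_dvd_iff)
qed

lemma plus_one_dvd_power_minus_one:
  fixes y :: nat
  assumes "even n"
  shows "y + 1 dvd y ^ n - 1"
proof (cases "y = 0")
  case False
  have "[int y ^ n = (-1) ^ n] (mod int y + 1)"
    by (intro cong_pow cong_minus_one_mod_plus_one)
  then have "[int (y ^ n) = int 1] (mod int (y + 1))"
    using assms by (simp add: ac_simps)
  then have "[y ^ n = 1] (mod y + 1)"
    by (simp only: cong_int_iff)
  moreover have "y ^ n \<ge> 1"
    using False by simp
  ultimately show ?thesis
    by (simp add: cong_altdef_nat)
qed simp

lemma minus_one_dvd_power_minus_one:
  fixes x :: nat
  shows "x - 1 dvd x ^ n - 1"
proof (cases "x = 0")
  case False
  have "[x = 1] (mod x - 1)"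
    using False by (simp add: cong_altdef_nat)
  then have "[x ^ n = 1] (mod x - 1)"
    by (metis cong_pow power_one)
  then show ?thesis
    using False by (simp add: cong_altdef_nat)
qed (cases n, simp_all)

lemma dvd_of_dvd_double_if_multiplicity_le:
  fixes m k l :: nat
  assumes "m dvd k" "m dvd 2 * l" "k \<noteq> 0" "multiplicity 2 k \<le> multiplicity 2 l"
  shows "m dvd l"
proof (cases "l = 0")
  case False
  have "m \<noteq> 0"
    using assms(1,3) by auto
  then show ?thesis
  proof (rule multiplicity_le_imp_dvd)
    fix p :: nat
    assume "prime p"
    show "multiplicity p m \<le> multiplicity p l"
    proof (cases "p = 2")
      case True
      then show ?thesis
        using dvd_imp_multiplicity_le[OF assms(1,3), of 2] assms(4) by simp
    next
      case False
      have "multiplicity p (2 * l) = multiplicity p l"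
        using \<open>prime p\<close> \<open>l \<noteq> 0\<close> False
        by (simp add: prime_elem_multiplicity_mult_distrib prime_multiplicity_other)
      then show ?thesis
        using dvd_imp_multiplicity_le[OF assms(2), of p] \<open>l \<noteq> 0\<close> by simp
    qed
  qed
qed simp

lemma gcd_two_power_minus_one_plus_one_eq_1:
  fixes k l :: nat
  assumes "k > 0" and "l = 0 \<or> multiplicity 2 k \<le> multiplicity 2 l"
  shows "gcd ((2::nat) ^ k - 1) (2 ^ l + 1) = 1"
proof -
  define d where "d = gcd ((2::nat) ^ k - 1) (2 ^ l + 1)"
  have d_dvd_minus: "d dvd 2 ^ k - 1" and d_dvd_plus: "d dvd 2 ^ l + 1"
    unfolding d_def by auto
  have "odd ((2::nat) ^ k - 1)"
    using assms(1) by simp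
  then have "odd d"
    using d_dvd_minus by (meson dvd_trans)
  have "[2 ^ k = 1] (mod d)"
    using d_dvd_minus by (simp add: cong_altdef_nat)
  then have ord_dvd_k: "ord d 2 dvd k"
    by (simp add: ord_divides')
  have square_minus_one: "(2::nat) ^ (2 * l) - 1 = (2 ^ l - 1) * (2 ^ l + 1)"
    by (cases "(2::nat) ^ l") (simp_all add: mult_2 power_add)
  have "d dvd 2 ^ (2 * l) - 1"
    unfolding square_minus_one using d_dvd_plus by (rule dvd_mult)
  then have "[2 ^ (2 * l) = 1] (mod d)"
    by (simp add: cong_altdef_nat)
  then have "ord d 2 dvd 2 * l"
    by (simp add: ord_divides')
  then have "ord d 2 dvd l"
  proof (cases "l = 0")
    case False
    then have "multiplicity 2 k \<le> multiplicity 2 l"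
      using assms(2) by simp
    with ord_dvd_k \<open>ord d 2 dvd 2 * l\<close> \<open>k > 0\<close> show ?thesis
      using dvd_of_dvd_double_if_multiplicity_le by blast
  qed simp
  then have "[2 ^ l = 1] (mod d)"
    by (simp add: ord_divides')
  then have "d dvd 2 ^ l - 1"
    by (simp add: cong_altdef_nat)
  with d_dvd_plus have "d dvd (2 ^ l + 1) - (2 ^ l - 1)"
    by (rule dvd_diff_nat)
  moreover have "(2::nat) ^ l + 1 - (2 ^ l - 1) = 2"
    by (simp add: Suc_leI)
  ultimately have "d \<le> 2"
    by (intro dvd_imp_le) simp_all
  with \<open>odd d\<close> have "d = 1"
    by presburger
  then show ?thesis
    unfolding d_def .
qed

lemma gcd_two_power_minus_one_plus_one_ne_1:
  fixes k l :: nat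
  assumes "l > 0" and "multiplicity 2 l < multiplicity 2 k"
  shows "gcd ((2::nat) ^ k - 1) (2 ^ l + 1) \<noteq> 1"
proof -
  define b where "b = multiplicity 2 l"
  define y where "y = (2::nat) ^ (2 ^ b)"
  obtain l' where l': "l = 2 ^ b * l'" "odd l'"
    using multiplicity_decompose'[of l 2] assms(1) unfolding b_def by auto
  obtain m where m: "k = 2 ^ b * (2 * m)"
  proof -
    have "2 ^ Suc b dvd k"
      using assms(2) unfolding b_def by (intro multiplicity_dvd') simp
    then show ?thesis
      using that by (auto simp: mult.assoc elim!: dvdE)
  qed
  have "y + 1 dvd 2 ^ l + 1"
    using plus_one_dvd_power_plus_one[OF l'(2), of y] unfolding y_def l'(1) by (simp add: power_mult)
  moreover have "y + 1 dvd 2 ^ k - 1"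
    using plus_one_dvd_power_minus_one[of "2 * m" y] unfolding y_def m by (simp add: power_mult)
  ultimately have "y + 1 \<le> gcd (2 ^ k - 1) (2 ^ l + 1)"
    by (intro dvd_imp_le) simp_all
  moreover have "y > 0"
    unfolding y_def by simp
  ultimately show ?thesis
    by linarith
qed

lemma gcd_two_power_minus_one_plus_one_eq_1_iff:
  fixes k l :: nat
  assumes "k > 0"
  shows "gcd ((2::nat) ^ k - 1) (2 ^ l + 1) = 1 \<longleftrightarrow> ord2 k \<le> ord2 l"
proof (cases "l = 0")
  case True
  then show ?thesis
    using gcd_two_power_minus_one_plus_one_eq_1[OF assms, of l] by (simp add: ord2_def)
next
  case False
  then have "gcd ((2::nat) ^ k - 1) (2 ^ l + 1) = 1 \<longleftrightarrow> multiplicity 2 k \<le> multiplicity 2 l"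
    using gcd_two_power_minus_one_plus_one_eq_1[OF assms, of l] gcd_two_power_minus_one_plus_one_ne_1[of l k]
    by (cases "multiplicity 2 l < multiplicity 2 k") auto
  then show ?thesis
    using assms False by (simp add: ord2_def)
qed

text \<open>The library's \<open>finite_field_power_card_eq_same\<close> needs the sort \<open>finite_field\<close>, which a type
  of sort \<open>{field, finite}\<close> is not known to have, so Fermat's little theorem is proved again here.\<close>

lemma power_card_UNIV_minus_one:
  fixes x :: "'a::{field,finite}"
  assumes "x \<noteq> 0"
  shows "x ^ (card (UNIV :: 'a set) - 1) = 1"
proof -
  let ?U = "UNIV - {0::'a}"
  have "x ^ card ?U * (\<Prod>y\<in>?U. y) = (\<Prod>y\<in>?U. x * y)"
    by (simp add: prod.distrib)
  also have "\<dots> = (\<Prod>y\<in>?U. y)"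
    by (rule prod.reindex_bij_witness[of _ "\<lambda>y. y / x" "\<lambda>y. x * y"]) (use assms in auto)
  finally have "x ^ card ?U = 1"
    by simp
  then show ?thesis
    by (simp add: card_Diff_singleton)
qed

lemma power_card_UNIV_eq_same:
  fixes x :: "'a::{field,finite}"
  shows "x ^ card (UNIV :: 'a set) = x"
proof (cases "x = 0")
  case False
  have "x ^ card (UNIV :: 'a set) = x * x ^ (card (UNIV :: 'a set) - 1)"
    using finite_UNIV_card_ge_0[where ?'a = 'a] by (simp flip: power_Suc)
  with power_card_UNIV_minus_one[OF False] show ?thesis
    by simp
qed (use finite_UNIV_card_ge_0[where ?'a = 'a] in simp)

lemma CHAR_eq_if_card_UNIV_eq_prime_power:
  assumes "prime p" and "card (UNIV :: 'a::{idom,finite} set) = p ^ n"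
  shows "CHAR('a) = p"
proof -
  have "prime CHAR('a)"
    by (intro prime_CHAR_semidom finite_imp_CHAR_pos) simp
  moreover have "CHAR('a) dvd p ^ n"
    using CHAR_dvd_CARD[where ?'a = 'a] assms(2) by simp
  ultimately show ?thesis
    using assms(1) by (blast intro: primes_dvd_imp_eq prime_dvd_power)
qed

lemma card_roots_of_unity_le:
  assumes "n > 0"
  shows "card {x::'a::idom. x ^ n = 1} \<le> n"
proof -
  define p where "p = Polynomial.monom (1::'a) n + [:-1:]"
  have "degree p = n"
    unfolding p_def using assms by (subst degree_add_eq_left) (auto simp: degree_monom_eq)
  then have "p \<noteq> 0"
    using assms by auto
  moreover have "{x. poly p x = 0} = {x::'a. x ^ n = 1}"
    by (auto simp: p_def poly_monom)
  ultimately show ?thesis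
    using card_poly_roots_bound[of p] \<open>degree p = n\<close> by simp
qed

lemma exists_nontrivial_root_of_unity:
  fixes g :: nat
  assumes "g \<ge> 2" and "g dvd card (UNIV :: 'a::{field,finite} set) - 1"
  shows "\<exists>z::'a. z \<noteq> 1 \<and> z ^ g = 1"
proof (rule ccontr)
  assume no_root: "\<not> ?thesis"
  define N where "N = card (UNIV :: 'a set) - 1"
  obtain r where r: "N = g * r"
    using assms(2) unfolding N_def by blast
  have card_units: "card (UNIV - {0::'a}) = N"
    unfolding N_def by (simp add: card_Diff_singleton)
  have unit_power: "x ^ N = 1" if "x \<noteq> 0" for x :: 'a
    unfolding N_def using that by (rule power_card_UNIV_minus_one)
  have "card {0::'a, 1} \<le> card (UNIV :: 'a set)"
    by (rule card_mono) simp_all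
  then have "N > 0"
    unfolding N_def by simp
  then have "r > 0"
    using r by simp
  have "inj_on (\<lambda>x. x ^ g) (UNIV - {0::'a})"
  proof (rule inj_onI)
    fix x y :: 'a
    assume "x \<in> UNIV - {0}" "y \<in> UNIV - {0}" "x ^ g = y ^ g"
    then have "(x / y) ^ g = 1"
      by (simp add: power_divide)
    then have "x / y = 1"
      using no_root by blast
    then show "x = y"
      using \<open>y \<in> UNIV - {0}\<close> by simp
  qed
  then have "N = card ((\<lambda>x. x ^ g) ` (UNIV - {0::'a}))"
    by (simp add: card_image card_units)
  also have "\<dots> \<le> card {y::'a. y ^ r = 1}"
  proof (intro card_mono)
    show "(\<lambda>x. x ^ g) ` (UNIV - {0::'a}) \<subseteq> {y. y ^ r = 1}"
      using unit_power by (auto simp: r simp flip: power_mult)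
  qed simp
  also have "\<dots> \<le> r"
    using \<open>r > 0\<close> by (rule card_roots_of_unity_le)
  finally show False
    using r \<open>r > 0\<close> assms(1) by (simp add: mult_le_cancel2)
qed

lemma subfield_of_order_power:
  assumes "c \<in> subfield_of_order q"
  shows "c ^ n \<in> subfield_of_order q"
proof -
  have "(c ^ n) ^ q = (c ^ q) ^ n"
    by (simp add: mult.commute flip: power_mult)
  then show ?thesis
    using assms by (simp add: subfield_of_order_def)
qed

lemma translate_subfield_of_order:
  fixes t :: "'a::field"
  assumes "prime CHAR('a)" and "q = CHAR('a) ^ k" and "t \<in> subfield_of_order q"
  shows "(+) t ` subfield_of_order q = subfield_of_order q"
proof -
  have frobenius_add: "(x + y) ^ q = x ^ q + y ^ q" for x y :: 'a
    using assms(1,2) by (rule freshmans_dream')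
  have "t + a \<in> subfield_of_order q" if "a \<in> subfield_of_order q" for a
    using assms(3) that by (simp add: subfield_of_order_def frobenius_add)
  moreover have "b - t \<in> subfield_of_order q" if "b \<in> subfield_of_order q" for b
  proof -
    have "b = (b - t) ^ q + t"
      using frobenius_add[of "b - t" t] assms(3) that by (simp add: subfield_of_order_def)
    then show ?thesis
      by (simp add: subfield_of_order_def algebra_simps)
  qed
  ultimately show ?thesis
    by (auto intro!: image_eqI[where x = "_ - t"])
qed

text \<open>For \<open>q\<close> a power of the characteristic, \<open>trace3 q\<close> restricted to \<open>subfield_of_order (q ^ 3)\<close>
  is the trace map of \<open>F_(q^3)\<close> over \<open>F_q\<close>.\<close>
definition trace3 :: "nat \<Rightarrow> 'a::field \<Rightarrow> 'a" where
  "trace3 q x = x ^ (q\<^sup>2) + x ^ q + x"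

lemma trace3_add:
  assumes "prime CHAR('a::field)" and "q = CHAR('a) ^ k"
  shows "trace3 q (x + y :: 'a) = trace3 q x + trace3 q y"
proof -
  have "q\<^sup>2 = CHAR('a) ^ (2 * k)"
    using assms(2) by (simp add: power_mult mult.commute)
  then show ?thesis
    unfolding trace3_def using assms by (simp add: freshmans_dream' algebra_simps)
qed

lemma trace3_mult_subfield_of_order:
  assumes "c \<in> subfield_of_order q"
  shows "trace3 q (c * x) = c * trace3 q x"
  using assms by (simp add: trace3_def subfield_of_order_def power_mult_distrib power2_eq_square
      power_mult algebra_simps)

lemma trace3_subfield_of_order:
  assumes "c \<in> subfield_of_order q"
  shows "trace3 q c = 3 * c"
  using assms by (simp add: trace3_def subfield_of_order_def power2_eq_square power_mult)

lemma trace3_power_CHAR_power: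
  assumes "prime CHAR('a::field)" and "Q = CHAR('a) ^ j"
  shows "trace3 q (x ^ Q :: 'a) = trace3 q x ^ Q"
  using assms by (simp add: trace3_def freshmans_dream' mult.commute flip: power_mult)

lemma trace3_mem_subfield_of_order:
  assumes "prime CHAR('a::field)" and "q = CHAR('a) ^ k" and "x ^ (q ^ 3) = (x :: 'a)"
  shows "trace3 q x \<in> subfield_of_order q"
proof -
  have "trace3 q x ^ q = trace3 q (x ^ q)"
    using assms(1,2) by (rule trace3_power_CHAR_power[symmetric])
  also have "\<dots> = x ^ (q ^ 3) + x ^ q\<^sup>2 + x ^ q"
    by (simp add: trace3_def power2_eq_square power3_eq_cube mult.commute flip: power_mult)
  finally show ?thesis
    using assms(3) by (simp add: subfield_of_order_def trace3_def algebra_simps)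
qed

lemma trace3_power_plus_one_shift:
  fixes u a :: "'a::field"
  assumes "CHAR('a) = 2" and "q = 2 ^ k" and "Q = 2 ^ j" and "a \<in> subfield_of_order q"
  defines "t \<equiv> trace3 q u"
  shows "trace3 q ((u + a) ^ (Q + 1)) = trace3 q (u ^ (Q + 1)) + t ^ (Q + 1) + (t + a) ^ (Q + 1)"
proof -
  have prime_char: "prime CHAR('a)"
    using assms(1) by simp
  have two: "(2::'a) = 0"
    using of_nat_CHAR[where ?'a = 'a] assms(1) by simp
  have frobenius_add: "(x + y) ^ Q = x ^ Q + y ^ Q" for x y :: 'a
    using prime_char assms(1,3) by (simp add: freshmans_dream')
  have expand: "(x + y) ^ (Q + 1) = x ^ (Q + 1) + y * x ^ Q + y ^ Q * x + y ^ (Q + 1)" for x y :: 'a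
    by (simp add: frobenius_add algebra_simps)
  have trace_add: "trace3 q (x + y) = trace3 q x + trace3 q y" for x y :: 'a
    using trace3_add[OF prime_char, of q k] assms(1,2) by simp
  have trace_power: "trace3 q (x ^ Q) = trace3 q x ^ Q" for x :: 'a
    using trace3_power_CHAR_power[OF prime_char, of Q j] assms(1,3) by simp
  have "trace3 q ((u + a) ^ (Q + 1))
      = trace3 q (u ^ (Q + 1)) + trace3 q (a * u ^ Q) + trace3 q (a ^ Q * u) + trace3 q (a ^ (Q + 1))"
    by (simp only: expand trace_add)
  also have "\<dots> = trace3 q (u ^ (Q + 1)) + a * t ^ Q + a ^ Q * t + 3 * a ^ (Q + 1)"
    using assms(4) subfield_of_order_power[OF assms(4)]
    by (simp only: trace3_mult_subfield_of_order trace3_subfield_of_order trace_power t_def)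
  also have "\<dots> = trace3 q (u ^ (Q + 1)) + t ^ (Q + 1) + (t + a) ^ (Q + 1)"
  proof -
    have double: "x + x = 0" for x :: 'a
      using two by (simp flip: mult_2)
    have "(3::'a) = 2 + 1"
      by simp
    with two have "(3::'a) = 1"
      by simp
    have "trace3 q (u ^ (Q + 1)) + t ^ (Q + 1) + (t + a) ^ (Q + 1)
        = trace3 q (u ^ (Q + 1)) + (t ^ (Q + 1) + t ^ (Q + 1)) + a * t ^ Q + a ^ Q * t + a ^ (Q + 1)"
      unfolding expand[of t a] by (simp add: algebra_simps)
    with \<open>(3::'a) = 1\<close> show ?thesis
      by (simp add: double)
  qed
  finally show ?thesis .
qed

lemma inj_on_trace3_power_plus_one_shift_iff:
  fixes u :: "'a::field"
  assumes "CHAR('a) = 2" and "q = 2 ^ k" and "Q = 2 ^ j" and "u ^ (q ^ 3) = u"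
  shows "inj_on (\<lambda>x. trace3 q (x ^ (Q + 1))) ((+) u ` subfield_of_order q)
    \<longleftrightarrow> inj_on (\<lambda>x::'a. x ^ (Q + 1)) (subfield_of_order q)"
proof -
  define S where "S = (subfield_of_order q :: 'a set)"
  define t where "t = trace3 q u"
  have "t \<in> S"
    using trace3_mem_subfield_of_order[of q k u] assms unfolding S_def t_def by simp
  have shift: "trace3 q ((u + a) ^ (Q + 1)) = (trace3 q (u ^ (Q + 1)) + t ^ (Q + 1)) + (t + a) ^ (Q + 1)"
    if "a \<in> S" for a
    using trace3_power_plus_one_shift[OF assms(1-3)] that unfolding S_def t_def by simp
  have "inj_on (\<lambda>x. trace3 q (x ^ (Q + 1))) ((+) u ` S)
      \<longleftrightarrow> inj_on (\<lambda>a. trace3 q ((u + a) ^ (Q + 1))) S"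
    by (subst comp_inj_on_iff) (simp_all add: o_def)
  also have "\<dots> \<longleftrightarrow> inj_on (\<lambda>a. (trace3 q (u ^ (Q + 1)) + t ^ (Q + 1)) + (t + a) ^ (Q + 1)) S"
    by (rule inj_on_cong) (rule shift)
  also have "\<dots> \<longleftrightarrow> inj_on (\<lambda>a. (t + a) ^ (Q + 1)) S"
    by (simp add: inj_on_def)
  also have "\<dots> \<longleftrightarrow> inj_on (\<lambda>x. x ^ (Q + 1)) ((+) t ` S)"
    by (subst comp_inj_on_iff) (simp_all add: o_def)
  also have "(+) t ` S = S"
    using translate_subfield_of_order[of q k t] assms(1,2) \<open>t \<in> S\<close> unfolding S_def by simp
  finally show ?thesis
    unfolding S_def .
qed

lemma inj_on_power_subfield_of_order:
  fixes P q :: nat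
  assumes "gcd (q - 1) P = 1" and "P > 0"
  shows "inj_on (\<lambda>x::'a::field. x ^ P) (subfield_of_order q)"
proof -
  obtain c j where bezout: "P * c = (q - 1) * j + 1"
    using bezout_nat[of P "q - 1"] assms by (auto simp: gcd.commute)
  have inverse: "(z ^ P) ^ c = z" if "z \<in> subfield_of_order q" "z \<noteq> 0" for z :: 'a
  proof -
    have "z * z ^ (q - 1) = z * 1"
      using that by (cases q) (simp_all add: subfield_of_order_def)
    then have "z ^ (q - 1) = 1"
      using \<open>z \<noteq> 0\<close> by simp
    have "(z ^ P) ^ c = (z ^ (q - 1)) ^ j * z"
      by (simp add: bezout power_add mult.commute flip: power_mult)
    then show ?thesis
      using \<open>z ^ (q - 1) = 1\<close> by simp
  qed
  show ?thesis
  proof (rule inj_onI)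
    fix x y :: 'a
    assume "x \<in> subfield_of_order q" "y \<in> subfield_of_order q" "x ^ P = y ^ P"
    show "x = y"
    proof (cases "x = 0 \<or> y = 0")
      case True
      then show ?thesis
        using \<open>x ^ P = y ^ P\<close> assms(2) by (auto simp: zero_power)
    next
      case False
      then have "x = (x ^ P) ^ c"
        using inverse \<open>x \<in> subfield_of_order q\<close> by simp
      also have "\<dots> = (y ^ P) ^ c"
        using \<open>x ^ P = y ^ P\<close> by simp
      also have "\<dots> = y"
        using inverse \<open>y \<in> subfield_of_order q\<close> False by simp
      finally show ?thesis .
    qed
  qed
qed

lemma inj_on_power_subfield_of_order_iff:
  fixes P q :: nat
  assumes "P > 0" and "q > 0" and "q - 1 dvd card (UNIV :: 'a::{field,finite} set) - 1"
  shows "inj_on (\<lambda>x::'a. x ^ P) (subfield_of_order q) \<longleftrightarrow> gcd (q - 1) P = 1"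
proof
  assume inj: "inj_on (\<lambda>x::'a. x ^ P) (subfield_of_order q)"
  show "gcd (q - 1) P = 1"
  proof (rule ccontr)
    define g where "g = gcd (q - 1) P"
    assume "gcd (q - 1) P \<noteq> 1"
    moreover have "g \<noteq> 0"
      unfolding g_def using assms(1) by simp
    ultimately have "g \<ge> 2"
      unfolding g_def by linarith
    moreover have "g dvd card (UNIV :: 'a set) - 1"
      unfolding g_def using assms(3) by (rule dvd_trans[OF gcd_dvd1])
    ultimately obtain z :: 'a where "z \<noteq> 1" "z ^ g = 1"
      using exists_nontrivial_root_of_unity by blast
    have root_of_multiple: "z ^ n = 1" if "g dvd n" for n
      using that \<open>z ^ g = 1\<close> by (auto elim!: dvdE simp: power_mult)
    have "z ^ (q - 1) = 1" and "z ^ P = 1"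
      by (simp_all add: root_of_multiple g_def)
    then have "z \<in> subfield_of_order q"
      using assms(2) by (cases q) (simp_all add: subfield_of_order_def)
    moreover have "(1::'a) \<in> subfield_of_order q"
      by (simp add: subfield_of_order_def)
    ultimately have "z = 1"
      using inj_onD[OF inj, of z 1] \<open>z ^ P = 1\<close> by simp
    with \<open>z \<noteq> 1\<close> show False ..
  qed
next
  assume "gcd (q - 1) P = 1"
  then show "inj_on (\<lambda>x::'a. x ^ P) (subfield_of_order q)"
    using assms(1) by (rule inj_on_power_subfield_of_order)
qed

theorem lemma3p2:
  fixes k l :: nat
  assumes "k > 0"
    and "card (UNIV :: 'a::{field,finite} set) = (2::nat) ^ (3 * k)"
  shows "((\<forall>u::'a. inj_on
             (\<lambda>x. x ^ ((2 ^ k)\<^sup>2 * (2 ^ l + 1)) + x ^ (2 ^ k * (2 ^ l + 1)) + x ^ (2 ^ l + 1))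
             ((\<lambda>a. u + a) ` subfield_of_order (2 ^ k)))
          \<longleftrightarrow> gcd ((2::nat) ^ k - 1) (2 ^ l + 1) = 1)
       \<and> (gcd ((2::nat) ^ k - 1) (2 ^ l + 1) = 1 \<longleftrightarrow> ord2 k \<le> ord2 l)"
proof -
  define q where "q = (2::nat) ^ k"
  define Q where "Q = (2::nat) ^ l"
  have card: "card (UNIV :: 'a set) = q ^ 3"
    using assms(2) unfolding q_def by (simp add: mult.commute power_mult)
  have power_swap: "x ^ (m * n) = (x ^ n) ^ m" for x :: 'a and m n
    by (simp add: mult.commute flip: power_mult)
  have "CHAR('a) = 2"
    using CHAR_eq_if_card_UNIV_eq_prime_power[OF two_is_prime_nat assms(2)] .
  moreover have "u ^ (q ^ 3) = u" for u :: 'a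
    using power_card_UNIV_eq_same[of u] unfolding card .
  ultimately have "(\<forall>u::'a. inj_on (\<lambda>x. trace3 q (x ^ (Q + 1))) ((+) u ` subfield_of_order q))
      \<longleftrightarrow> inj_on (\<lambda>x::'a. x ^ (Q + 1)) (subfield_of_order q)"
    using inj_on_trace3_power_plus_one_shift_iff[OF _ q_def Q_def] by blast
  also have "\<dots> \<longleftrightarrow> gcd (q - 1) (Q + 1) = 1"
  proof (rule inj_on_power_subfield_of_order_iff)
    show "q - 1 dvd card (UNIV :: 'a set) - 1"
      unfolding card by (rule minus_one_dvd_power_minus_one)
  qed (simp_all add: q_def)
  also have "(\<lambda>x::'a. trace3 q (x ^ (Q + 1)))
      = (\<lambda>x. x ^ (q\<^sup>2 * (Q + 1)) + x ^ (q * (Q + 1)) + x ^ (Q + 1))"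
    unfolding trace3_def power_swap[of _ "q\<^sup>2"] power_swap[of _ q] ..
  finally show ?thesis
    using gcd_two_power_minus_one_plus_one_eq_1_iff[OF assms(1), of l] unfolding q_def Q_def by blast
qed

end
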